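(* Under the standing assumptions below, for every nonempty bounded open interval $J\subset\mathbb R$, $$\lambda(J)\le\frac{\pi^2}{\mathcal L(J)^2}\,\frac{1}{\big(⨍_J w\big)^3}\Bigg(⨍_J pw^2+2⨍_J\Big|pw^2-\frac{⨍_J pw^2}{⨍_J w}\,w\Big|\Bigg)+\beta^2,$$ where $⨍_J g=\frac{1}{\mathcal L(J)}\int_J g\,dx$.
   Context: Standing assumptions: $1<\beta<\infty$; $q\in L^\infty(\mathbb R)$ with $0\le q\le\beta$ a.e.; $p,w\in L^\infty(\mathbb R)$ with $1/\beta\le p\le\beta$ and $1/\beta\le w\le\beta$ a.e. For a nonempty bounded open interval $J$, $\lambda(J)=\min_{u\in H^1_0(J),u\ne0}\frac{\int_J p u'^2\,dx+\int_J q u^2\,dx}{\int_J w u^2\,dx}$. $\mathcal L$ denotes Lebesgue measure. *)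

theory Defs
  imports "HOL-Analysis.Analysis"
begin

definition avg :: "real \<Rightarrow> real \<Rightarrow> (real \<Rightarrow> real) \<Rightarrow> real" where
  "avg a b g = (LINT x:{a<..<b}|lebesgue. g x) / (b - a)"

text \<open>Membership in the Sobolev space H^1_0((a,b)), in its one-dimensional description:
  u is the primitive on [a,b] of a square-integrable function g (its weak derivative),
  vanishing at both endpoints.\<close>
definition H10 :: "real \<Rightarrow> real \<Rightarrow> (real \<Rightarrow> real) \<Rightarrow> (real \<Rightarrow> real) \<Rightarrow> bool" where
  "H10 a b u g \<longleftrightarrow>
     g \<in> borel_measurable lebesgue \<and>
     set_integrable lebesgue {a<..<b} (\<lambda>x. (g x)^2) \<and>
     (\<forall>x\<in>{a..b}. u x = (LINT t:{a<..<x}|lebesgue. g t)) \<and>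
     (LINT t:{a<..<b}|lebesgue. g t) = 0"

text \<open>The principal eigenvalue lambda((a,b)) as the infimum (= minimum) of the Rayleigh quotient
  over nonzero elements of H^1_0((a,b)); g is the (weak) derivative u'.\<close>
definition eigval :: "(real \<Rightarrow> real) \<Rightarrow> (real \<Rightarrow> real) \<Rightarrow> (real \<Rightarrow> real) \<Rightarrow> real \<Rightarrow> real \<Rightarrow> real" where
  "eigval p q w a b = Inf
     {((LINT x:{a<..<b}|lebesgue. p x * (g x)^2) + (LINT x:{a<..<b}|lebesgue. q x * (u x)^2))
        / (LINT x:{a<..<b}|lebesgue. w x * (u x)^2)
      | u g. H10 a b u g \<and> (\<exists>x\<in>{a<..<b}. u x \<noteq> 0)}"

end

theory Submission
  imports Defs
begin

text \<open>
  Test the Rayleigh quotient with \<open>u = sin (\<pi> W / W b)\<close>, where \<open>W x = \<integral>\<^sub>a\<^sup>x w\<close>, so that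
  \<open>u' = \<pi> / W b \<cdot> w \<cdot> cos (\<pi> W / W b)\<close>. The map \<open>W\<close> pushes the measure \<open>w dx\<close> on \<open>(a, b)\<close>
  forward to Lebesgue measure on \<open>(0, W b)\<close>, hence \<open>\<integral> w u\<^sup>2 = \<integral> w cos\<^sup>2 (\<pi> W / W b) = W b / 2\<close>.
  Splitting \<open>p w\<^sup>2 = C w + (p w\<^sup>2 - C w)\<close> with \<open>C = avg a b (p w\<^sup>2) / avg a b w\<close> bounds the kinetic term by
  \<open>(\<pi> / W b)\<^sup>2 (C W b / 2 + \<integral> \<bar>p w\<^sup>2 - C w\<bar>)\<close>, and \<open>q \<le> \<beta> \<le> \<beta>\<^sup>2 w\<close> bounds the potential term
  by \<open>\<beta>\<^sup>2 W b / 2\<close>. Dividing by \<open>W b / 2 = (b - a) avg a b w / 2\<close> gives the estimate.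
\<close>

lemma set_integrable_bounded_Ioo:
  fixes f :: "real \<Rightarrow> real"
  assumes "f \<in> borel_measurable lebesgue" "AE x in lebesgue. \<bar>f x\<bar> \<le> B"
  shows "set_integrable lebesgue {x<..<y} f"
  unfolding set_integrable_def
  by (cases "x \<le> y"; intro integrableI_bounded_set_indicator[where B=B]) (use assms in auto)

lemma AE_lebesgue_neq: "AE x in lebesgue. x \<noteq> (c::real)"
  by (simp add: AE_completion AE_lborel_singleton)

lemma continuous_imp_borel_measurable_lebesgue:
  "continuous_on UNIV (f :: real \<Rightarrow> real) \<Longrightarrow> f \<in> borel_measurable lebesgue"
  by (metis measurable_lborel2 borel_measurable_continuous_onI measurable_completion)

lemma ident_borel_measurable_lebesgue[measurable]: "(\<lambda>x::real. x) \<in> borel_measurable lebesgue"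
  using id_borel_measurable_lebesgue by (simp add: id_def)

locale positive_weight =
  fixes w :: "real \<Rightarrow> real" and \<beta> a :: real
  assumes beta_pos: "0 < \<beta>"
    and w_measurable[measurable]: "w \<in> borel_measurable lebesgue"
    and w_bounds: "AE x in lebesgue. 1 / \<beta> \<le> w x \<and> w x \<le> \<beta>"
begin

definition W :: "real \<Rightarrow> real" where
  "W x = (LINT t:{a<..<x}|lebesgue. w t)"

lemma w_pos: "AE x in lebesgue. 0 < w x"
proof -
  have "0 < 1 / \<beta>" using beta_pos by simp
  show ?thesis using w_bounds by (rule eventually_mono) (use \<open>0 < 1 / \<beta>\<close> in linarith)
qed

lemma set_integrable_w: "set_integrable lebesgue {x<..<y} w"
  by (rule set_integrable_bounded_Ioo[OF w_measurable, where B=\<beta>])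
     (use w_bounds w_pos in \<open>eventually_elim, auto\<close>)

lemma set_integral_w_bounds:
  assumes "x \<le> y"
  shows "(y - x) / \<beta> \<le> (LINT t:{x<..<y}|lebesgue. w t)"
    and "(LINT t:{x<..<y}|lebesgue. w t) \<le> \<beta> * (y - x)"
proof -
  have const: "set_integrable lebesgue {x<..<y} (\<lambda>_. c)" for c :: real
    by (rule set_integrable_bounded_Ioo[where B="\<bar>c\<bar>"]) auto
  have "(LINT t:{x<..<y}|lebesgue. 1 / \<beta>) \<le> (LINT t:{x<..<y}|lebesgue. w t)"
    by (rule set_integral_mono_AE[OF const set_integrable_w]) (use w_bounds in auto)
  then show "(y - x) / \<beta> \<le> (LINT t:{x<..<y}|lebesgue. w t)"
    using assms by (simp add: set_integral_const)
  have "(LINT t:{x<..<y}|lebesgue. w t) \<le> (LINT t:{x<..<y}|lebesgue. \<beta>)"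
    by (rule set_integral_mono_AE[OF set_integrable_w const]) (use w_bounds in auto)
  then show "(LINT t:{x<..<y}|lebesgue. w t) \<le> \<beta> * (y - x)"
    using assms by (simp add: set_integral_const mult.commute)
qed

lemma indicator_times_w_measurable[measurable]:
  "(\<lambda>x. indicator S x * w x) \<in> borel_measurable lebesgue" if "S \<in> sets lebesgue"
  using that by measurable

lemma W_add:
  assumes "a \<le> x" "x \<le> y"
  shows "W y = W x + (LINT t:{x<..<y}|lebesgue. w t)"
proof -
  have "W y = (LINT t:{a<..<x} \<union> {x<..<y}|lebesgue. w t)"
    unfolding W_def
    by (rule set_integral_cong_set)
       (use AE_lebesgue_neq[of x] assms in
        \<open>auto elim!: eventually_mono simp: set_borel_measurable_def intro!: indicator_times_w_measurable\<close>)
  also have "\<dots> = W x + (LINT t:{x<..<y}|lebesgue. w t)"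
    unfolding W_def by (rule set_integral_Un[OF _ set_integrable_w set_integrable_w]) auto
  finally show ?thesis .
qed

lemma W_eq_0: "x \<le> a \<Longrightarrow> W x = 0"
  unfolding W_def by (simp add: set_lebesgue_integral_def)

lemma W_strict_mono:
  assumes "a \<le> x" "x < y"
  shows "W x < W y"
proof -
  have "0 < (y - x) / \<beta>" using assms beta_pos by simp
  then show ?thesis using W_add[of x y] set_integral_w_bounds[of x y] assms by linarith
qed

lemma W_mono: "a \<le> x \<Longrightarrow> x \<le> y \<Longrightarrow> W x \<le> W y"
  using W_strict_mono[of x y] by (cases "x = y") auto

lemma W_pos: "a < x \<Longrightarrow> 0 < W x"
  using W_strict_mono[of a x] W_eq_0[of a] by simp

lemma W_lipschitz: "\<beta>-lipschitz_on UNIV W"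
proof -
  have ordered: "\<bar>W y - W x\<bar> \<le> \<beta> * \<bar>y - x\<bar>" if "x \<le> y" for x y
  proof -
    have le: "max a x \<le> max a y" using that by simp
    have "W y - W x = W (max a y) - W (max a x)"
      by (cases "x \<le> a"; cases "y \<le> a") (simp_all add: W_eq_0 max_def)
    also have "\<dots> = (LINT t:{max a x<..<max a y}|lebesgue. w t)"
      using W_add[OF _ le] by simp
    finally have diff: "W y - W x = (LINT t:{max a x<..<max a y}|lebesgue. w t)" .
    have "0 \<le> (max a y - max a x) / \<beta>" "\<beta> * (max a y - max a x) \<le> \<beta> * (y - x)"
      using that beta_pos by (auto intro!: mult_left_mono)
    then show ?thesis
      using set_integral_w_bounds[OF le] diff that by (simp add: abs_le_iff)
  qed
  have "dist (W x) (W y) \<le> \<beta> * dist x y" for x y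
    using ordered[of x y] ordered[of y x]
    by (cases "x \<le> y") (simp_all add: dist_real_def abs_minus_commute)
  then show ?thesis
    using beta_pos by (intro lipschitz_onI) auto
qed

lemma continuous_on_W: "continuous_on UNIV W"
  by (rule lipschitz_on_continuous_on[OF W_lipschitz])

lemma W_measurable[measurable]: "W \<in> borel_measurable lebesgue"
  by (rule continuous_imp_borel_measurable_lebesgue[OF continuous_on_W])

lemma W_superlevel:
  assumes "a \<le> c" "W c = s"
  shows "{a<..<b} \<inter> {x. s < W x} = {a<..<b} \<inter> {c<..}"
proof -
  have "W c < W x \<longleftrightarrow> c < x" if "a < x" for x
    using W_strict_mono[of c x] W_mono[of x c] that assms(1) by (cases "c < x") auto
  then show ?thesis using assms(2) by auto
qed

definition weight_measure :: "real \<Rightarrow> real measure" where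
  "weight_measure b = density lebesgue (\<lambda>x. ennreal (indicator {a<..<b} x * w x))"

lemma sets_weight_measure[simp, measurable_cong]: "sets (weight_measure b) = sets lebesgue"
  by (simp add: weight_measure_def)

lemma W_measurable_weight_measure: "W \<in> measurable (weight_measure b) lborel"
  by (subst measurable_cong_sets[OF sets_weight_measure sets_lborel]) (rule W_measurable)

lemma indicator_times_w_nonneg: "AE x in lebesgue. 0 \<le> indicator S x * w x"
  using w_pos by (rule eventually_mono) (simp add: indicator_def)

lemma emeasure_distr_W_greaterThan:
  "emeasure (distr (weight_measure b) lborel W) {s<..}
     = ennreal (LINT x:{a<..<b} \<inter> {x. s < W x}|lebesgue. w x)"
proof -
  let ?S = "{a<..<b} \<inter> {x. s < W x}"
  have S_sets: "?S \<in> sets lebesgue"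
  proof -
    have "?S = {x\<in>space lebesgue. a < x \<and> x < b \<and> s < W x}" by auto
    also have "\<dots> \<in> sets lebesgue" by measurable
    finally show ?thesis .
  qed
  have preimage_sets: "W -` {s<..} \<in> sets lebesgue"
  proof -
    have "W -` {s<..} = {x\<in>space lebesgue. s < W x}" by auto
    also have "\<dots> \<in> sets lebesgue" by measurable
    finally show ?thesis .
  qed
  have "emeasure (distr (weight_measure b) lborel W) {s<..}
        = emeasure (weight_measure b) (W -` {s<..})"
    by (subst emeasure_distr[OF W_measurable_weight_measure]) (simp_all add: weight_measure_def)
  also have "\<dots> = (\<integral>\<^sup>+ x. ennreal (indicator {a<..<b} x * w x) * indicator (W -` {s<..}) x \<partial>lebesgue)"
    unfolding weight_measure_def
    by (rule emeasure_density[OF _ preimage_sets]) measurable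
  also have "\<dots> = (\<integral>\<^sup>+ x. ennreal (indicator ?S x * w x) \<partial>lebesgue)"
    by (intro nn_integral_cong) (simp add: indicator_def)
  also have "\<dots> = ennreal (LINT x:?S|lebesgue. w x)"
  proof -
    have "set_integrable lebesgue ?S w"
      by (rule set_integrable_subset[OF set_integrable_w[of a b] S_sets]) auto
    then show ?thesis
      unfolding set_lebesgue_integral_def real_scaleR_def set_integrable_def
      by (rule nn_integral_eq_integral[OF _ indicator_times_w_nonneg])
  qed
  finally show ?thesis .
qed

lemma distr_W_weight_measure:
  assumes "a < b"
  shows "distr (weight_measure b) lborel W = density lborel (indicator {0<..<W b})"
proof -
  have Wb_pos: "0 < W b" using W_pos assms by simp
  have upper: "emeasure (distr (weight_measure b) lborel W) {s<..}
             = emeasure lborel ({0<..<W b} \<inter> {s<..})" for s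
  proof -
    consider "s \<le> 0" | "W b \<le> s" | "0 < s" "s < W b" by linarith
    then show ?thesis
    proof cases
      case 1
      then have "{a<..<b} \<inter> {x. s < W x} = {a<..<b}" "{0<..<W b} \<inter> {s<..} = {0<..<W b}"
        using W_pos by fastforce+
      then show ?thesis
        using Wb_pos by (simp add: emeasure_distr_W_greaterThan W_def)
    next
      case 2
      have "W x \<le> W b" if "a < x" "x < b" for x
        using W_mono that by simp
      then have "{a<..<b} \<inter> {x. s < W x} = {}"
        using 2 by force
      moreover have "{0<..<W b} \<inter> {s<..} = {}" using 2 by auto
      ultimately show ?thesis
        by (simp add: emeasure_distr_W_greaterThan set_lebesgue_integral_def)
    next
      case 3
      obtain c where c: "a \<le> c" "c \<le> b" "W c = s"
        using IVT'[of W a s b] 3 assms W_eq_0[of a] continuous_on_subset[OF continuous_on_W]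
        by auto
      have "{a<..<b} \<inter> {x. s < W x} = {c<..<b}"
        using W_superlevel[OF c(1,3)] c(1) by auto
      moreover have "{0<..<W b} \<inter> {s<..} = {s<..<W b}" using 3 by auto
      moreover have "(LINT t:{c<..<b}|lebesgue. w t) = W b - s"
        using W_add[OF c(1,2)] c(3) by simp
      ultimately show ?thesis
        using 3 by (simp add: emeasure_distr_W_greaterThan)
    qed
  qed
  show ?thesis
  proof (rule measure_eqI_lessThan)
    fix s
    have "emeasure lborel ({0<..<W b} \<inter> {s<..}) \<le> emeasure lborel {0<..<W b}"
      by (rule emeasure_mono) auto
    also have "\<dots> < \<infinity>" using Wb_pos by simp
    finally show "emeasure (distr (weight_measure b) lborel W) {s<..} < \<infinity>"
      unfolding upper .
    show "emeasure (distr (weight_measure b) lborel W) {s<..} =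
          emeasure (density lborel (indicator {0<..<W b})) {s<..}"
      unfolding upper by (rule emeasure_restricted[symmetric]) auto
  qed simp_all
qed

lemma set_integral_W_substitution:
  assumes "a < b" and f[measurable]: "f \<in> borel_measurable borel"
  shows "(LINT x:{a<..<b}|lebesgue. w x * f (W x)) = (LINT s:{0<..<W b}|lborel. f s)"
proof -
  have "(LINT s:{0<..<W b}|lborel. f s)
        = integral\<^sup>L (density lborel (\<lambda>x. ennreal (indicator {0<..<W b} x))) f"
    unfolding set_lebesgue_integral_def by (subst integral_density) auto
  also have "\<dots> = integral\<^sup>L (distr (weight_measure b) lborel W) f"
    by (simp add: distr_W_weight_measure[OF assms(1)] ennreal_indicator)
  also have "\<dots> = integral\<^sup>L (weight_measure b) (\<lambda>x. f (W x))"
    by (rule integral_distr[OF W_measurable_weight_measure]) simp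
  also have "\<dots> = integral\<^sup>L lebesgue (\<lambda>x. (indicator {a<..<b} x * w x) *\<^sub>R f (W x))"
    unfolding weight_measure_def
    by (rule integral_density) (auto intro!: indicator_times_w_measurable indicator_times_w_nonneg)
  also have "\<dots> = (LINT x:{a<..<b}|lebesgue. w x * f (W x))"
    unfolding set_lebesgue_integral_def
    by (intro Bochner_Integration.integral_cong) (simp_all add: indicator_def)
  finally show ?thesis ..
qed

end

lemma set_integral_Ioo_FTC:
  fixes f F :: "real \<Rightarrow> real"
  assumes "0 \<le> X" "continuous_on {0..X} f"
    "\<And>x. 0 \<le> x \<Longrightarrow> x \<le> X \<Longrightarrow> (F has_real_derivative f x) (at x within {0..X})"
  shows "(LINT s:{0<..<X}|lborel. f s) = F X - F 0"
proof -
  have "(LBINT s=ereal 0..ereal X. f s) = F X - F 0"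
    using assms by (intro interval_integral_FTC_finite)
      (auto simp: min_absorb1 max_absorb2 has_real_derivative_iff_has_vector_derivative[symmetric])
  then show ?thesis
    using assms(1) by (simp add: interval_lebesgue_integral_def)
qed

lemma set_integral_scaled_cos:
  fixes M X :: real
  assumes "0 \<le> X" "M \<noteq> 0"
  shows "(LINT s:{0<..<X}|lborel. pi / M * cos (pi * s / M)) = sin (pi * X / M)"
proof -
  have "(LINT s:{0<..<X}|lborel. pi / M * cos (pi * s / M)) = sin (pi * X / M) - sin (pi * 0 / M)"
    using assms
    by (intro set_integral_Ioo_FTC continuous_intros)
       (auto intro!: derivative_eq_intros simp: field_simps)
  then show ?thesis by simp
qed

lemma set_integral_sin_square_half_period:
  fixes M :: real
  assumes "0 < M"
  shows "(LINT s:{0<..<M}|lborel. (sin (pi * s / M))^2) = M / 2"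
proof -
  have deriv: "1 / 2 - M / (4 * pi) * (cos (2 * pi * s / M) * (2 * pi / M)) = (sin (pi * s / M))^2"
    for s
    using cos_double_sin[of "pi * s / M"] assms by (simp add: field_simps mult.assoc)
  have "(LINT s:{0<..<M}|lborel. (sin (pi * s / M))^2)
        = (M / 2 - M / (4 * pi) * sin (2 * pi * M / M)) - (0 / 2 - M / (4 * pi) * sin (2 * pi * 0 / M))"
    using assms deriv
    by (intro set_integral_Ioo_FTC continuous_intros) (auto intro!: derivative_eq_intros)
  also have "\<dots> = M / 2" using assms by simp
  finally show ?thesis .
qed

lemma set_integral_cos_square_half_period:
  fixes M :: real
  assumes "0 < M"
  shows "(LINT s:{0<..<M}|lborel. (cos (pi * s / M))^2) = M / 2"
proof -
  have deriv: "1 / 2 + M / (4 * pi) * (cos (2 * pi * s / M) * (2 * pi / M)) = (cos (pi * s / M))^2"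
    for s
    using cos_double_cos[of "pi * s / M"] assms by (simp add: field_simps mult.assoc)
  have "(LINT s:{0<..<M}|lborel. (cos (pi * s / M))^2)
        = (M / 2 + M / (4 * pi) * sin (2 * pi * M / M)) - (0 / 2 + M / (4 * pi) * sin (2 * pi * 0 / M))"
    using assms deriv
    by (intro set_integral_Ioo_FTC continuous_intros) (auto intro!: derivative_eq_intros)
  also have "\<dots> = M / 2" using assms by simp
  finally show ?thesis .
qed

lemma mult_le_mult_add_abs_diff:
  fixes X Y t :: real
  assumes "0 \<le> t" "t \<le> 1"
  shows "X * t \<le> Y * t + \<bar>X - Y\<bar>"
proof -
  have "(X - Y) * t \<le> \<bar>X - Y\<bar> * t" using assms by (intro mult_right_mono) auto
  also have "\<dots> \<le> \<bar>X - Y\<bar>" using assms by (simp add: mult_left_le)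
  finally show ?thesis by (simp add: algebra_simps)
qed

lemma eigval_le_Rayleigh_quotient:
  assumes "H10 a b u g" "\<exists>x\<in>{a<..<b}. u x \<noteq> 0"
    and "AE x in lebesgue. 0 \<le> p x" "AE x in lebesgue. 0 \<le> q x" "AE x in lebesgue. 0 \<le> w x"
  shows "eigval p q w a b \<le>
           ((LINT x:{a<..<b}|lebesgue. p x * (g x)^2) + (LINT x:{a<..<b}|lebesgue. q x * (u x)^2))
           / (LINT x:{a<..<b}|lebesgue. w x * (u x)^2)"
  unfolding eigval_def
proof (rule cInf_lower)
  have nonneg: "0 \<le> (LINT x:{a<..<b}|lebesgue. r x * (v x)^2)"
    if "AE x in lebesgue. 0 \<le> r x" for r v :: "real \<Rightarrow> real"
    unfolding set_lebesgue_integral_def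
    by (rule integral_nonneg_AE) (use that in \<open>auto elim!: eventually_mono split: split_indicator\<close>)
  show "bdd_below {((LINT x:{a<..<b}|lebesgue. p x * (g x)^2) + (LINT x:{a<..<b}|lebesgue. q x * (u x)^2))
                     / (LINT x:{a<..<b}|lebesgue. w x * (u x)^2) | u g. H10 a b u g \<and> (\<exists>x\<in>{a<..<b}. u x \<noteq> 0)}"
    by (rule bdd_belowI[where m=0]) (use nonneg assms(3-5) in auto)
qed (use assms(1,2) in blast)

context positive_weight
begin

definition test_fun :: "real \<Rightarrow> real \<Rightarrow> real" where
  "test_fun b x = sin (pi * W x / W b)"

definition test_deriv :: "real \<Rightarrow> real \<Rightarrow> real" where
  "test_deriv b x = pi / W b * w x * cos (pi * W x / W b)"

lemma test_fun_measurable[measurable]: "test_fun b \<in> borel_measurable lebesgue"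
  unfolding test_fun_def by measurable

lemma test_deriv_measurable[measurable]: "test_deriv b \<in> borel_measurable lebesgue"
  unfolding test_deriv_def by measurable

lemma test_fun_eq_integral:
  assumes "a < b" "x \<in> {a..b}"
  shows "test_fun b x = (LINT t:{a<..<x}|lebesgue. test_deriv b t)"
proof (cases "x = a")
  case True
  then show ?thesis by (simp add: test_fun_def W_eq_0 set_lebesgue_integral_def)
next
  case False
  with assms have "a < x" by simp
  have "(LINT t:{a<..<x}|lebesgue. test_deriv b t)
        = (LINT t:{a<..<x}|lebesgue. w t * (pi / W b * cos (pi * W t / W b)))"
    by (simp add: test_deriv_def mult.assoc mult.left_commute)
  also have "\<dots> = (LINT s:{0<..<W x}|lborel. pi / W b * cos (pi * s / W b))"
    by (rule set_integral_W_substitution[OF \<open>a < x\<close>]) measurable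
  also have "\<dots> = test_fun b x"
    using set_integral_scaled_cos[of "W x" "W b"] W_pos[OF \<open>a < x\<close>] W_pos[OF assms(1)]
    by (simp add: test_fun_def)
  finally show ?thesis ..
qed

lemma test_fun_H10:
  assumes "a < b"
  shows "H10 a b (test_fun b) (test_deriv b)"
  unfolding H10_def
proof (intro conjI ballI test_deriv_measurable)
  show "set_integrable lebesgue {a<..<b} (\<lambda>x. (test_deriv b x)^2)"
  proof (rule set_integrable_bounded_Ioo[where B="(pi / W b * \<beta>)^2"])
    show "AE x in lebesgue. \<bar>(test_deriv b x)^2\<bar> \<le> (pi / W b * \<beta>)^2"
      using w_bounds w_pos
    proof eventually_elim
      case (elim x)
      have "\<bar>test_deriv b x\<bar> \<le> pi / W b * \<beta> * 1"
        unfolding test_deriv_def abs_mult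
        using elim W_pos[OF assms] by (intro mult_mono) auto
      then have "\<bar>test_deriv b x\<bar>^2 \<le> (pi / W b * \<beta>)^2"
        by (intro power_mono) auto
      then show ?case by simp
    qed
  qed measurable
  show "(LINT t:{a<..<b}|lebesgue. test_deriv b t) = 0"
    using test_fun_eq_integral[OF assms, of b] assms W_pos[OF assms] by (simp add: test_fun_def)
qed (use test_fun_eq_integral[OF assms] in blast)

lemma set_integral_w_test_fun_square:
  assumes "a < b"
  shows "(LINT x:{a<..<b}|lebesgue. w x * (test_fun b x)^2) = W b / 2"
proof -
  have "(LINT x:{a<..<b}|lebesgue. w x * (test_fun b x)^2)
        = (LINT s:{0<..<W b}|lborel. (sin (pi * s / W b))^2)"
    unfolding test_fun_def by (rule set_integral_W_substitution[OF assms]) measurable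
  also have "\<dots> = W b / 2"
    by (rule set_integral_sin_square_half_period[OF W_pos[OF assms]])
  finally show ?thesis .
qed

lemma test_fun_nonzero:
  assumes "a < b"
  shows "\<exists>x\<in>{a<..<b}. test_fun b x \<noteq> 0"
proof (rule ccontr)
  assume "\<not> ?thesis"
  then have "(\<lambda>x. indicator {a<..<b} x *\<^sub>R (w x * (test_fun b x)^2)) = (\<lambda>x. 0)"
    by (auto simp: indicator_def)
  then have "(LINT x:{a<..<b}|lebesgue. w x * (test_fun b x)^2) = 0"
    by (simp add: set_lebesgue_integral_def)
  then show False
    using set_integral_w_test_fun_square[OF assms] W_pos[OF assms] by simp
qed

lemma set_integral_q_test_fun_square_le:
  assumes "a < b" and [measurable]: "q \<in> borel_measurable lebesgue"
    and q_bounds: "AE x in lebesgue. 0 \<le> q x \<and> q x \<le> \<beta>"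
  shows "(LINT x:{a<..<b}|lebesgue. q x * (test_fun b x)^2) \<le> \<beta>^2 * (W b / 2)"
proof -
  have u_square: "(test_fun b x)^2 \<le> 1" for x
    by (simp add: test_fun_def abs_square_le_1)
  have "set_integrable lebesgue {a<..<b} (\<lambda>x. q x * (test_fun b x)^2)"
  proof (rule set_integrable_bounded_Ioo[where B=\<beta>])
    show "AE x in lebesgue. \<bar>q x * (test_fun b x)^2\<bar> \<le> \<beta>"
      using q_bounds
    proof eventually_elim
      case (elim x)
      then have "q x * (test_fun b x)^2 \<le> \<beta> * 1"
        using u_square by (intro mult_mono) auto
      then show ?case using elim by simp
    qed
  qed measurable
  moreover have "set_integrable lebesgue {a<..<b} (\<lambda>x. \<beta>^2 * (w x * (test_fun b x)^2))"
  proof (rule set_integrable_bounded_Ioo[where B="\<beta>^2 * \<beta>"])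
    show "AE x in lebesgue. \<bar>\<beta>^2 * (w x * (test_fun b x)^2)\<bar> \<le> \<beta>^2 * \<beta>"
      using w_bounds w_pos
    proof eventually_elim
      case (elim x)
      then have "w x * (test_fun b x)^2 \<le> \<beta> * 1"
        using u_square by (intro mult_mono) auto
      then show ?case using elim by (simp add: abs_mult mult_left_mono)
    qed
  qed measurable
  moreover have "q x * (test_fun b x)^2 \<le> \<beta>^2 * (w x * (test_fun b x)^2)"
    if "0 \<le> q x \<and> q x \<le> \<beta>" "1 / \<beta> \<le> w x" for x
  proof -
    have "q x \<le> \<beta>^2 * (1 / \<beta>)"
      using that beta_pos by (simp add: power2_eq_square)
    also have "\<dots> \<le> \<beta>^2 * w x"
      using that by (intro mult_left_mono) auto
    finally have "q x * (test_fun b x)^2 \<le> \<beta>^2 * w x * (test_fun b x)^2"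
      by (intro mult_right_mono) auto
    then show ?thesis by (simp add: mult.assoc)
  qed
  then have "AE x\<in>{a<..<b} in lebesgue. q x * (test_fun b x)^2 \<le> \<beta>^2 * (w x * (test_fun b x)^2)"
    using q_bounds w_bounds by (auto elim!: eventually_mono eventually_rev_mp)
  ultimately have "(LINT x:{a<..<b}|lebesgue. q x * (test_fun b x)^2)
                   \<le> (LINT x:{a<..<b}|lebesgue. \<beta>^2 * (w x * (test_fun b x)^2))"
    by (rule set_integral_mono_AE)
  then show ?thesis
    by (simp add: set_integral_w_test_fun_square[OF assms(1)])
qed

lemma set_integral_p_test_deriv_square_le:
  assumes "a < b" and [measurable]: "p \<in> borel_measurable lebesgue"
    and p_bounds: "AE x in lebesgue. 0 \<le> p x \<and> p x \<le> \<beta>"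
  shows "(LINT x:{a<..<b}|lebesgue. p x * (test_deriv b x)^2)
         \<le> (pi / W b)^2 * (C * (W b / 2) + (LINT x:{a<..<b}|lebesgue. \<bar>p x * (w x)^2 - C * w x\<bar>))"
proof -
  define cs where "cs x = (cos (pi * W x / W b))^2" for x
  have [measurable]: "cs \<in> borel_measurable lebesgue" unfolding cs_def by measurable
  have cs_bounds: "0 \<le> cs x" "cs x \<le> 1" for x
    by (auto simp: cs_def abs_square_le_1)
  have pw2_bounds: "AE x in lebesgue. 0 \<le> p x * (w x)^2 \<and> p x * (w x)^2 \<le> \<beta> * \<beta>^2"
    using p_bounds w_bounds w_pos by eventually_elim (auto intro!: mult_mono power_mono)
  have Cw_bound: "AE x in lebesgue. \<bar>C * w x\<bar> \<le> \<bar>C\<bar> * \<beta>"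
    using w_bounds w_pos by eventually_elim (simp add: abs_mult mult_left_mono)
  have int_pw2cs: "set_integrable lebesgue {a<..<b} (\<lambda>x. p x * (w x)^2 * cs x)"
  proof (rule set_integrable_bounded_Ioo[where B="\<beta> * \<beta>^2"])
    show "AE x in lebesgue. \<bar>p x * (w x)^2 * cs x\<bar> \<le> \<beta> * \<beta>^2"
      using pw2_bounds
    proof eventually_elim
      case (elim x)
      then have "0 \<le> p x * (w x)^2 * cs x" "p x * (w x)^2 * cs x \<le> p x * (w x)^2"
        using cs_bounds[of x] by (simp_all add: mult_right_le_one_le)
      then show ?case using elim by (metis abs_of_nonneg order_trans)
    qed
  qed measurable
  have int_Cwcs: "set_integrable lebesgue {a<..<b} (\<lambda>x. C * w x * cs x)"
  proof (rule set_integrable_bounded_Ioo[where B="\<bar>C\<bar> * \<beta>"])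
    show "AE x in lebesgue. \<bar>C * w x * cs x\<bar> \<le> \<bar>C\<bar> * \<beta>"
      using Cw_bound
    proof eventually_elim
      case (elim x)
      have "\<bar>C * w x\<bar> * cs x \<le> \<bar>C * w x\<bar>"
        using cs_bounds[of x] by (simp add: mult_right_le_one_le)
      then show ?case using elim cs_bounds[of x] by (simp add: abs_mult)
    qed
  qed measurable
  have int_dev: "set_integrable lebesgue {a<..<b} (\<lambda>x. \<bar>p x * (w x)^2 - C * w x\<bar>)"
  proof (rule set_integrable_bounded_Ioo[where B="\<beta> * \<beta>^2 + \<bar>C\<bar> * \<beta>"])
    show "AE x in lebesgue. \<bar>\<bar>p x * (w x)^2 - C * w x\<bar>\<bar> \<le> \<beta> * \<beta>^2 + \<bar>C\<bar> * \<beta>"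
      using pw2_bounds Cw_bound by eventually_elim auto
  qed measurable
  have "(LINT x:{a<..<b}|lebesgue. p x * (test_deriv b x)^2)
        = (LINT x:{a<..<b}|lebesgue. (pi / W b)^2 * (p x * (w x)^2 * cs x))"
    by (simp add: test_deriv_def cs_def power_mult_distrib power_divide mult_ac)
  also have "\<dots> = (pi / W b)^2 * (LINT x:{a<..<b}|lebesgue. p x * (w x)^2 * cs x)"
    by (rule set_integral_mult_right)
  also have "(LINT x:{a<..<b}|lebesgue. p x * (w x)^2 * cs x)
             \<le> (LINT x:{a<..<b}|lebesgue. C * w x * cs x + \<bar>p x * (w x)^2 - C * w x\<bar>)"
    by (rule set_integral_mono[OF int_pw2cs set_integral_add(1)[OF int_Cwcs int_dev]])
       (rule mult_le_mult_add_abs_diff[OF cs_bounds])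
  also have "\<dots> = C * (W b / 2) + (LINT x:{a<..<b}|lebesgue. \<bar>p x * (w x)^2 - C * w x\<bar>)"
  proof -
    have "(LINT x:{a<..<b}|lebesgue. w x * cs x) = (LINT s:{0<..<W b}|lborel. (cos (pi * s / W b))^2)"
      unfolding cs_def by (rule set_integral_W_substitution[OF assms(1)]) measurable
    also have "\<dots> = W b / 2"
      by (rule set_integral_cos_square_half_period[OF W_pos[OF assms(1)]])
    finally have "(LINT x:{a<..<b}|lebesgue. w x * cs x) = W b / 2" .
    then show ?thesis
      unfolding set_integral_add(2)[OF int_Cwcs int_dev] by (simp add: mult.assoc)
  qed
  finally show ?thesis by (simp add: mult_left_mono)
qed

end

theorem mainTheorem4:
  fixes p q w :: "real \<Rightarrow> real" and \<beta> a b :: real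
  assumes "1 < \<beta>"
    and "p \<in> borel_measurable lebesgue" "q \<in> borel_measurable lebesgue" "w \<in> borel_measurable lebesgue"
    and "AE x in lebesgue. 0 \<le> q x \<and> q x \<le> \<beta>"
    and "AE x in lebesgue. 1 / \<beta> \<le> p x \<and> p x \<le> \<beta>"
    and "AE x in lebesgue. 1 / \<beta> \<le> w x \<and> w x \<le> \<beta>"
    and "a < b"
  shows "eigval p q w a b \<le>
           pi^2 / (b - a)^2 * (1 / (avg a b w)^3) *
           (avg a b (\<lambda>x. p x * (w x)^2)
            + 2 * avg a b (\<lambda>x. \<bar>p x * (w x)^2 - avg a b (\<lambda>y. p y * (w y)^2) / avg a b w * w x\<bar>))
           + \<beta>^2"
proof -
  interpret positive_weight w \<beta> a
    by unfold_locales (use assms in auto)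
  have "0 < 1 / \<beta>" using assms(1) by simp
  have p_bounds: "AE x in lebesgue. 0 \<le> p x \<and> p x \<le> \<beta>"
    using assms(6) by (rule eventually_mono) (use \<open>0 < 1 / \<beta>\<close> in linarith)
  define C where "C = avg a b (\<lambda>x. p x * (w x)^2) / avg a b w"
  define D where "D = avg a b (\<lambda>x. \<bar>p x * (w x)^2 - C * w x\<bar>)"
  have M_eq: "W b = avg a b w * (b - a)" and M_pos: "0 < W b"
    using assms(8) W_pos[OF assms(8)] by (simp_all add: avg_def W_def)
  have "AE x in lebesgue. 0 \<le> p x" "AE x in lebesgue. 0 \<le> q x" "AE x in lebesgue. 0 \<le> w x"
    using p_bounds assms(5) w_pos by (auto elim!: eventually_mono)
  then have "eigval p q w a b
        \<le> ((LINT x:{a<..<b}|lebesgue. p x * (test_deriv b x)^2)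
            + (LINT x:{a<..<b}|lebesgue. q x * (test_fun b x)^2)) / (W b / 2)"
    by (subst set_integral_w_test_fun_square[OF assms(8), symmetric])
       (rule eigval_le_Rayleigh_quotient[OF test_fun_H10[OF assms(8)] test_fun_nonzero[OF assms(8)]])
  also have "\<dots> \<le> ((pi / W b)^2 * (C * (W b / 2) + D * (b - a)) + \<beta>^2 * (W b / 2)) / (W b / 2)"
    using set_integral_p_test_deriv_square_le[OF assms(8,2) p_bounds, of C]
      set_integral_q_test_fun_square_le[OF assms(8,3,5)] M_pos assms(8)
    by (intro divide_right_mono add_mono) (simp_all add: D_def avg_def)
  also have "\<dots> = pi^2 / (b - a)^2 * (1 / (avg a b w)^3) *
                   (avg a b (\<lambda>x. p x * (w x)^2) + 2 * D) + \<beta>^2"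
  proof -
    have "0 < avg a b w" "0 < b - a"
      using M_eq M_pos assms(8) by (simp_all add: zero_less_mult_iff)
    moreover have "((pi / (A * L))^2 * (A1 / A * (A * L / 2) + D * L) + \<beta>^2 * (A * L / 2)) / (A * L / 2)
                   = pi^2 / L^2 * (1 / A^3) * (A1 + 2 * D) + \<beta>^2"
      if "0 < A" "0 < L" for A L A1 :: real
      using that by (simp add: field_simps power2_eq_square power3_eq_cube)
    ultimately show ?thesis unfolding M_eq C_def by blast
  qed
  finally show ?thesis unfolding D_def C_def .
qed

end
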